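(* Fix $c\in\mathbb{N}_0$ and, for $n\in\mathbb{N}$, let $A_n=\mathbb{K}[x_i^2,x_ix_{i+1},\dots,x_ix_{i+c}: i\in[n]]\subseteq R_n=\mathbb{K}[x_1,\dots,x_{n+c}]$, graded by $[A_n]_d=A_n\cap[R_n]_{2d}$. Then the equivariant Hilbert series $\operatorname{equivH}_{\mathcal{A}}(s,t)=\sum_{n\ge1}\sum_{d\ge0}\dim_{\mathbb{K}}[A_n]_d\,t^ds^n$ of the family $\mathcal{A}=(A_n)_{n\in\mathbb{N}}$ is a rational function.
   Context: $\mathbb{K}$ is a field; $R_n$ is standard graded; $[n]=\{1,\dots,n\}$. *)

theory Defs
  imports "HOL-Library.Poly_Mapping" "HOL-Analysis.Analysis"
begin

type_synonym 'k mpoly = "(nat \<Rightarrow>\<^sub>0 nat) \<Rightarrow>\<^sub>0 'k"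

definition mvar :: "nat \<Rightarrow> 'k::field mpoly" where
  "mvar i = Poly_Mapping.single (Poly_Mapping.single i 1) 1"

definition mscale :: "'k::field \<Rightarrow> 'k mpoly \<Rightarrow> 'k mpoly" where
  "mscale a p = Poly_Mapping.map (\<lambda>x. a * x) p"

definition mon_deg :: "(nat \<Rightarrow>\<^sub>0 nat) \<Rightarrow> nat" where
  "mon_deg m = (\<Sum>i\<in>Poly_Mapping.keys m. Poly_Mapping.lookup m i)"

definition homogeneous :: "nat \<Rightarrow> 'k::field mpoly \<Rightarrow> bool" where
  "homogeneous e p \<longleftrightarrow> (\<forall>m\<in>Poly_Mapping.keys p. mon_deg m = e)"

definition gensA :: "nat \<Rightarrow> nat \<Rightarrow> 'k::field mpoly set" where
  "gensA c n = {mvar i * mvar j | i j. 1 \<le> i \<and> i \<le> n \<and> i \<le> j \<and> j \<le> i + c}"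

inductive_set subalg :: "'k::field mpoly set \<Rightarrow> 'k mpoly set" for G where
  gen: "g \<in> G \<Longrightarrow> g \<in> subalg G"
| one: "1 \<in> subalg G"
| add: "p \<in> subalg G \<Longrightarrow> q \<in> subalg G \<Longrightarrow> p + q \<in> subalg G"
| mult: "p \<in> subalg G \<Longrightarrow> q \<in> subalg G \<Longrightarrow> p * q \<in> subalg G"
| smult: "p \<in> subalg G \<Longrightarrow> mscale a p \<in> subalg G"

definition algA :: "nat \<Rightarrow> nat \<Rightarrow> 'k::field mpoly set" where
  "algA c n = subalg (gensA c n)"

definition gradedA :: "nat \<Rightarrow> nat \<Rightarrow> nat \<Rightarrow> 'k::field mpoly set" where
  "gradedA c n d = {p \<in> algA c n. homogeneous (2 * d) p}"

definition dimK :: "'k::field mpoly set \<Rightarrow> nat" where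
  "dimK V = vector_space.dim mscale V"

text \<open>A bivariate formal power series with coefficients H n d (of s^n t^d) is rational:
  there are polynomials P, Q in Q[s,t], Q \<noteq> 0, with Q * H = P in Q[[s,t]].\<close>
definition rational_bivariate :: "(nat \<Rightarrow> nat \<Rightarrow> rat) \<Rightarrow> bool" where
  "rational_bivariate H \<longleftrightarrow> (\<exists>(P::nat \<Rightarrow> nat \<Rightarrow> rat) (Q::nat \<Rightarrow> nat \<Rightarrow> rat) N.
      (\<forall>i j. (N < i \<or> N < j) \<longrightarrow> P i j = 0 \<and> Q i j = 0) \<and>
      (\<exists>i j. Q i j \<noteq> 0) \<and>
      (\<forall>n d. (\<Sum>i\<le>n. \<Sum>j\<le>d. Q i j * H (n - i) (d - j)) = P n d))"

end

theory Submission
  imports Defs "HOL-Library.Multiset" "HOL-Computational_Algebra.Polynomial_FPS"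
begin

text \<open>
  The monomials of degree \<open>2d\<close> in \<open>A\<^sub>n\<close> are the products of \<open>d\<close> admissible pairs
  \<open>x\<^sub>i x\<^sub>j\<close> (\<open>i \<le> n\<close>, \<open>i \<le> j \<le> i + c\<close>), so \<open>dim [A\<^sub>n]\<^sub>d\<close> counts such
  products. Each of them has a unique canonical factorization: the variables above \<open>n\<close> are
  matched, in increasing order, with equally many of the largest variables not above \<open>n\<close>,
  giving pairs \<open>(n - a, n + b)\<close> with \<open>1 \<le> b\<close> and \<open>a + b \<le> c\<close>; the remaining smallest
  variables are paired off consecutively. Grouping by the largest \<open>a\<close> that occurs, the
  Hilbert series becomes the product of two series: one with a row for each \<open>a \<le> c\<close>, each
  rational in \<open>t\<close> with denominator \<open>(1 - t)\<^bsup>2c+1\<^esup>\<close>, and the series \<open>G\<close> of the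
  consecutive pairings, which satisfies \<open>(1 - s - t (1 + s + \<dots> + s\<^sup>c)) G = s\<close>.
\<close>

unbundle no vec_syntax
unbundle fps_syntax

section \<open>Subalgebras generated by monomials\<close>

lemma lookup_mscale [simp]: "Poly_Mapping.lookup (mscale a p) m = a * Poly_Mapping.lookup p m"
  by (simp add: mscale_def Poly_Mapping.map.rep_eq when_def)

interpretation mscale: vector_space "mscale :: 'k::field \<Rightarrow> 'k mpoly \<Rightarrow> 'k mpoly"
  by unfold_locales (auto intro!: poly_mapping_eqI simp: lookup_add algebra_simps)

lemma keys_mscale_subset: "Poly_Mapping.keys (mscale a p) \<subseteq> Poly_Mapping.keys p"
  by (auto simp: in_keys_iff)

lemma mpoly_monomial_expansion:
  "p = (\<Sum>m\<in>Poly_Mapping.keys p. mscale (Poly_Mapping.lookup p m) (Poly_Mapping.single m (1::'k::field)))"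
  (is "_ = ?q")
proof (rule poly_mapping_eqI)
  fix k
  have "Poly_Mapping.lookup ?q k = (\<Sum>m\<in>Poly_Mapping.keys p. Poly_Mapping.lookup p m * (1 when m = k))"
    by (simp add: lookup_sum lookup_single)
  also have "\<dots> = Poly_Mapping.lookup p k"
    by (cases "k \<in> Poly_Mapping.keys p") (auto simp: when_def in_keys_iff if_distrib cong: if_cong)
  finally show "Poly_Mapping.lookup p k = Poly_Mapping.lookup ?q k"
    by simp
qed

definition monomial_span :: "(nat \<Rightarrow>\<^sub>0 nat) set \<Rightarrow> 'k::field mpoly set" where
  "monomial_span S = {p. Poly_Mapping.keys p \<subseteq> S}"

lemma monomial_span_subset_span:
  "monomial_span S \<subseteq> mscale.span ((\<lambda>m. Poly_Mapping.single m (1::'k::field)) ` S)"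
proof
  fix p :: "'k mpoly"
  assume "p \<in> monomial_span S"
  then have "(\<Sum>m\<in>Poly_Mapping.keys p. mscale (Poly_Mapping.lookup p m) (Poly_Mapping.single m 1))
      \<in> mscale.span ((\<lambda>m. Poly_Mapping.single m 1) ` S)"
    by (intro mscale.span_sum mscale.span_scale mscale.span_base) (auto simp: monomial_span_def)
  then show "p \<in> mscale.span ((\<lambda>m. Poly_Mapping.single m 1) ` S)"
    using mpoly_monomial_expansion[of p] by simp
qed

lemma independent_monomials:
  "mscale.independent ((\<lambda>m. Poly_Mapping.single m (1::'k::field)) ` S)"
  unfolding mscale.independent_explicit_module
proof (intro allI impI)
  fix T u v
  assume T: "finite T" "T \<subseteq> (\<lambda>m. Poly_Mapping.single m (1::'k)) ` S"
    and zero: "(\<Sum>w\<in>T. mscale (u w) w) = 0" and v: "v \<in> T"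
  from v T obtain m where m: "v = Poly_Mapping.single m 1" by auto
  have "w = v" if w: "w \<in> T" "Poly_Mapping.lookup w m \<noteq> 0" for w
  proof -
    obtain m' where "w = Poly_Mapping.single m' 1"
      using w(1) T(2) by auto
    with w(2) m show ?thesis
      by (auto simp: lookup_single when_def split: if_splits)
  qed
  then have "(\<Sum>w\<in>T. u w * Poly_Mapping.lookup w m)
      = (\<Sum>w\<in>T. if w = v then u v * Poly_Mapping.lookup v m else 0)"
    by (intro sum.cong) auto
  also have "\<dots> = u v"
    using T(1) v m by simp
  finally show "u v = 0"
    using arg_cong[OF zero, of "\<lambda>p. Poly_Mapping.lookup p m"] by (simp add: lookup_sum)
qed

lemma dimK_monomial_span:
  assumes "finite S"
  shows "dimK (monomial_span S :: 'k::field mpoly set) = card S"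
proof -
  have "mscale.dim (monomial_span S :: 'k mpoly set) = card ((\<lambda>m. Poly_Mapping.single m (1::'k)) ` S)"
    by (rule mscale.dim_unique[OF _ monomial_span_subset_span independent_monomials refl])
      (auto simp: monomial_span_def)
  also have "\<dots> = card S"
    by (rule card_image) (auto intro!: inj_onI dest: arg_cong[where f = Poly_Mapping.keys])
  finally show ?thesis
    by (simp add: dimK_def)
qed

lemma subalg_zero: "0 \<in> subalg (G :: 'k::field mpoly set)"
proof -
  have "mscale 0 1 \<in> subalg G"
    by (intro subalg.smult subalg.one)
  then show ?thesis
    by simp
qed

lemma subalg_sum: "finite A \<Longrightarrow> (\<And>x. x \<in> A \<Longrightarrow> f x \<in> subalg G) \<Longrightarrow> sum f A \<in> subalg G"
  by (induction A rule: finite_induct) (auto intro: subalg_zero subalg.add)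

lemma subalg_subset_monomial_span:
  assumes "p \<in> subalg ((\<lambda>a. Poly_Mapping.single (f a) (1::'k::field)) ` A)"
  shows "p \<in> monomial_span {\<Sum>\<^sub># (image_mset f P) | P. set_mset P \<subseteq> A}"
  using assms
proof (induction rule: subalg.induct)
  case (gen g)
  then obtain a where "a \<in> A" "g = Poly_Mapping.single (f a) 1"
    by blast
  then show ?case
    by (auto simp: monomial_span_def intro!: exI[of _ "{#a#}"])
next
  case one
  show ?case
    by (auto simp: monomial_span_def intro!: exI[of _ "{#}"])
next
  case (add p q)
  then show ?case
    using keys_add[of p q] by (auto simp: monomial_span_def)
next
  case (mult p q)
  have "m \<in> {\<Sum>\<^sub># (image_mset f P) | P. set_mset P \<subseteq> A}"
    if pq: "m \<in> Poly_Mapping.keys (p * q)" for m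
  proof -
    obtain a b where m: "m = a + b" "a \<in> Poly_Mapping.keys p" "b \<in> Poly_Mapping.keys q"
      using keys_mult pq by blast
    obtain P Q where "a = \<Sum>\<^sub># (image_mset f P)" "set_mset P \<subseteq> A"
      "b = \<Sum>\<^sub># (image_mset f Q)" "set_mset Q \<subseteq> A"
      using m(2,3) mult.IH unfolding monomial_span_def by blast
    then show ?thesis
      using m(1) by (auto intro!: exI[of _ "P + Q"])
  qed
  then show ?case
    by (auto simp: monomial_span_def)
next
  case (smult p a)
  then show ?case
    using keys_mscale_subset unfolding monomial_span_def by blast
qed

lemma single_sum_mset_in_subalg:
  assumes "set_mset P \<subseteq> A"
  shows "Poly_Mapping.single (\<Sum>\<^sub># (image_mset f P)) (1::'k::field)
    \<in> subalg ((\<lambda>a. Poly_Mapping.single (f a) 1) ` A)"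
  using assms
proof (induction P)
  case empty
  then show ?case
    by (simp add: subalg.one)
next
  case (add a P)
  have "Poly_Mapping.single (\<Sum>\<^sub># (image_mset f (add_mset a P))) (1::'k)
      = Poly_Mapping.single (f a) 1 * Poly_Mapping.single (\<Sum>\<^sub># (image_mset f P)) 1"
    by (simp add: mult_single)
  then show ?case
    using add by (auto intro: subalg.mult subalg.gen)
qed

lemma subalg_monomials:
  "subalg ((\<lambda>a. Poly_Mapping.single (f a) (1::'k::field)) ` A)
    = monomial_span {\<Sum>\<^sub># (image_mset f P) | P. set_mset P \<subseteq> A}"
proof
  show "subalg ((\<lambda>a. Poly_Mapping.single (f a) 1) ` A)
      \<subseteq> (monomial_span {\<Sum>\<^sub># (image_mset f P) | P. set_mset P \<subseteq> A} :: 'k mpoly set)"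
    using subalg_subset_monomial_span by blast
  show "monomial_span {\<Sum>\<^sub># (image_mset f P) | P. set_mset P \<subseteq> A}
      \<subseteq> subalg ((\<lambda>a. Poly_Mapping.single (f a) (1::'k)) ` A)"
  proof
    fix p :: "'k mpoly"
    assume "p \<in> monomial_span {\<Sum>\<^sub># (image_mset f P) | P. set_mset P \<subseteq> A}"
    then have "(\<Sum>m\<in>Poly_Mapping.keys p. mscale (Poly_Mapping.lookup p m) (Poly_Mapping.single m 1))
        \<in> subalg ((\<lambda>a. Poly_Mapping.single (f a) 1) ` A)"
      by (intro subalg_sum subalg.smult) (auto simp: monomial_span_def intro: single_sum_mset_in_subalg)
    then show "p \<in> subalg ((\<lambda>a. Poly_Mapping.single (f a) 1) ` A)"
      using mpoly_monomial_expansion[of p] by simp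
  qed
qed

lemma mon_deg_add: "mon_deg (a + b) = mon_deg a + mon_deg b"
  unfolding mon_deg_def by (rule setsum_keys_plus_distrib[where f = "\<lambda>_ x. x"]) simp_all

lemma mon_deg_zero [simp]: "mon_deg 0 = 0"
  and mon_deg_single [simp]: "mon_deg (Poly_Mapping.single i k) = k"
  by (simp_all add: mon_deg_def)

definition pair_mon :: "nat \<times> nat \<Rightarrow> (nat \<Rightarrow>\<^sub>0 nat)" where
  "pair_mon p = Poly_Mapping.single (fst p) 1 + Poly_Mapping.single (snd p) 1"

definition pairs_mon :: "(nat \<times> nat) multiset \<Rightarrow> (nat \<Rightarrow>\<^sub>0 nat)" where
  "pairs_mon P = \<Sum>\<^sub># (image_mset pair_mon P)"

definition admissible_pairs :: "nat \<Rightarrow> nat \<Rightarrow> (nat \<times> nat) set" where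
  "admissible_pairs c n = {(i, j). 1 \<le> i \<and> i \<le> n \<and> i \<le> j \<and> j \<le> i + c}"

definition monsA :: "nat \<Rightarrow> nat \<Rightarrow> nat \<Rightarrow> (nat \<Rightarrow>\<^sub>0 nat) set" where
  "monsA c n d = {pairs_mon P | P. set_mset P \<subseteq> admissible_pairs c n \<and> size P = d}"

lemma pairs_mon_empty [simp]: "pairs_mon {#} = 0"
  and pairs_mon_add_mset [simp]: "pairs_mon (add_mset p P) = pair_mon p + pairs_mon P"
  and pairs_mon_union [simp]: "pairs_mon (P + Q) = pairs_mon P + pairs_mon Q"
  by (simp_all add: pairs_mon_def)

lemma mon_deg_pairs_mon: "mon_deg (pairs_mon P) = 2 * size P"
  by (induction P) (simp_all add: mon_deg_add pair_mon_def)

lemma gensA_eq_pair_monomials: "gensA c n = (\<lambda>p. Poly_Mapping.single (pair_mon p) 1) ` admissible_pairs c n"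
  by (force simp: gensA_def admissible_pairs_def mvar_def mult_single pair_mon_def image_iff)

lemma gradedA_eq_monomial_span: "gradedA c n d = monomial_span (monsA c n d)"
proof -
  have "monsA c n d = {m \<in> {pairs_mon P | P. set_mset P \<subseteq> admissible_pairs c n}. mon_deg m = 2 * d}"
    by (auto simp: monsA_def mon_deg_pairs_mon)
  then show ?thesis
    unfolding gradedA_def algA_def gensA_eq_pair_monomials subalg_monomials pairs_mon_def[symmetric]
    by (auto simp: monomial_span_def homogeneous_def)
qed

lemma lookup_pairs_mon:
  "Poly_Mapping.lookup (pairs_mon P) x = count (image_mset fst P) x + count (image_mset snd P) x"
  by (induction P) (auto simp: pair_mon_def lookup_add lookup_single when_def)

lemma keys_pairs_mon: "x \<in> Poly_Mapping.keys (pairs_mon P) \<longleftrightarrow> (\<exists>p\<in>#P. x = fst p \<or> x = snd p)"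
  by (auto simp: in_keys_iff lookup_pairs_mon)

lemma pair_mon_swap: "pair_mon (a, b) + pair_mon (a', b') = pair_mon (a, b') + pair_mon (a', b)"
  and pair_mon_commute: "pair_mon (a, b) = pair_mon (b, a)"
  by (simp_all add: pair_mon_def ac_simps)

lemma pair_mon_min_max: "pair_mon (min a b, max a b) = pair_mon (a, b)"
  by (cases "a \<le> b") (simp_all add: pair_mon_commute min_def max_def)

section \<open>Canonical factorizations\<close>

lemma extract_chain_pair:
  assumes "P \<noteq> {#}" and P: "\<forall>p\<in>#P. p \<in> admissible_pairs c n \<and> n < snd p"
  obtains h t R where "pairs_mon P = pair_mon (h, t) + pairs_mon R" "size P = Suc (size R)"
    "(h, t) \<in> admissible_pairs c n" "n < t"
    "\<forall>p\<in>#R. p \<in> admissible_pairs c n \<and> n < snd p \<and> h \<le> fst p \<and> t \<le> snd p"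
proof -
  define h where "h = Min (fst ` set_mset P)"
  define t where "t = Min (snd ` set_mset P)"
  have min: "h \<le> fst p" "t \<le> snd p" if "p \<in># P" for p
    using that by (simp_all add: h_def t_def)
  have "h \<in> fst ` set_mset P" "t \<in> snd ` set_mset P"
    unfolding h_def t_def using \<open>P \<noteq> {#}\<close> by (auto intro!: Min_in)
  then obtain w u where hw: "(h, w) \<in># P" and ut: "(u, t) \<in># P"
    by force
  obtain P1 where P1: "P = add_mset (h, w) P1"
    using multi_member_split[OF hw] by blast
  show ?thesis
  proof (cases "w = t")
    case True
    show ?thesis
      by (rule that[of h t P1]) (use P P1 True min in auto)
  next
    case False
    then obtain R where R: "P1 = add_mset (u, t) R"
      using ut P1 multi_member_split[of "(u, t)" P1] by auto
    have "h \<le> u" "t \<le> w"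
      using min hw ut by force+
    show ?thesis
    proof (rule that[of h t "add_mset (u, w) R"])
      show "pairs_mon P = pair_mon (h, t) + pairs_mon (add_mset (u, w) R)"
        using pair_mon_swap[of h w u t] by (simp add: P1 R ac_simps)
      show "\<forall>p\<in>#add_mset (u, w) R. p \<in> admissible_pairs c n \<and> n < snd p \<and> h \<le> fst p \<and> t \<le> snd p"
        using P min \<open>h \<le> u\<close> \<open>t \<le> w\<close> unfolding P1 R by (auto simp: admissible_pairs_def)
    qed (use P P1 R \<open>t \<le> w\<close> in \<open>auto simp: admissible_pairs_def\<close>)
  qed
qed

lemma extract_pair_with_lower_partner:
  assumes P: "set_mset P \<subseteq> admissible_pairs c n" and "\<exists>p\<in>#P. snd p \<le> n"
  obtains z w R where "pairs_mon P = pair_mon (z, w) + pairs_mon R" "size P = Suc (size R)"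
    "(z, w) \<in> admissible_pairs c n" "w \<le> n"
    "set_mset R \<subseteq> admissible_pairs c n" "\<forall>p\<in>#R. z \<le> fst p"
proof -
  define z where "z = Min (fst ` set_mset P)"
  have min: "z \<le> fst p" if "p \<in># P" for p
    using that by (simp add: z_def)
  have "z \<in> fst ` set_mset P"
    unfolding z_def using assms(2) by (auto intro!: Min_in)
  then obtain w P1 where P1: "P = add_mset (z, w) P1"
    by (force dest: multi_member_split)
  show ?thesis
  proof (cases "w \<le> n")
    case True
    show ?thesis
      by (rule that[of z w P1]) (use P P1 True min in auto)
  next
    case False
    then obtain a b R where R: "P1 = add_mset (a, b) R" and "b \<le> n"
      using assms(2) P1 by (force dest: multi_member_split)
    have "z \<le> a"
      using min[of "(a, b)"] P1 R by simp
    show ?thesis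
    proof (rule that[of z b "add_mset (a, w) R"])
      show "pairs_mon P = pair_mon (z, b) + pairs_mon (add_mset (a, w) R)"
        using pair_mon_swap[of z w a b] by (simp add: P1 R ac_simps)
    qed (use P P1 R min False \<open>b \<le> n\<close> \<open>z \<le> a\<close> in \<open>auto simp: admissible_pairs_def\<close>)
  qed
qed

lemma extract_free_pair:
  assumes "set_mset P \<subseteq> admissible_pairs c n" and "\<exists>p\<in>#P. snd p \<le> n"
  obtains z1 z2 R where "pairs_mon P = pair_mon (z1, z2) + pairs_mon R" "size P = Suc (size R)"
    "(z1, z2) \<in> admissible_pairs c n" "z2 \<le> n"
    "set_mset R \<subseteq> admissible_pairs c n" "\<forall>p\<in>#R. z2 \<le> fst p"
proof -
  obtain z w Q where Q: "pairs_mon P = pair_mon (z, w) + pairs_mon Q" "size P = Suc (size Q)"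
    "(z, w) \<in> admissible_pairs c n" "w \<le> n"
    "set_mset Q \<subseteq> admissible_pairs c n" "\<forall>p\<in>#Q. z \<le> fst p"
    using extract_pair_with_lower_partner[OF assms] .
  show ?thesis
  proof (cases "\<forall>p\<in>#Q. w \<le> fst p")
    case True
    then show ?thesis
      using that Q by blast
  next
    case False
    define u where "u = Min (fst ` set_mset Q)"
    have min: "u \<le> fst p" if "p \<in># Q" for p
      using that by (simp add: u_def)
    have "u < w"
      using False min by (meson leI order_trans)
    have "u \<in> fst ` set_mset Q"
      unfolding u_def using False by (auto intro!: Min_in)
    then obtain v R where R: "Q = add_mset (u, v) R"
      by (force dest: multi_member_split)
    show ?thesis
    proof (rule that[of z u "add_mset (min w v, max w v) R"])
      have "pair_mon (z, w) + pair_mon (u, v) = pair_mon (z, u) + pair_mon (min w v, max w v)"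
        unfolding pair_mon_min_max by (simp add: pair_mon_def ac_simps)
      then show "pairs_mon P = pair_mon (z, u) + pairs_mon (add_mset (min w v, max w v) R)"
        using Q(1) by (simp add: R ac_simps)
    qed (use Q R min \<open>u < w\<close> in \<open>auto simp: admissible_pairs_def\<close>)
  qed
qed

definition free_list :: "nat \<Rightarrow> (nat \<times> nat) list \<Rightarrow> bool" where
  "free_list c fl \<longleftrightarrow> sorted_wrt (\<lambda>p q. snd q \<le> fst p) fl \<and>
     (\<forall>p\<in>set fl. 1 \<le> fst p \<and> fst p \<le> snd p \<and> snd p \<le> fst p + c)"

definition chain_elems :: "nat \<Rightarrow> (nat \<times> nat) set" where
  "chain_elems c = {(a, b). 1 \<le> b \<and> a + b \<le> c}"

definition chain_le :: "nat \<times> nat \<Rightarrow> nat \<times> nat \<Rightarrow> bool" where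
  "chain_le e e' \<longleftrightarrow> fst e' \<le> fst e \<and> snd e \<le> snd e'"

definition chain :: "nat \<Rightarrow> (nat \<times> nat) list \<Rightarrow> bool" where
  "chain c cl \<longleftrightarrow> sorted_wrt chain_le cl \<and> set cl \<subseteq> chain_elems c"

definition chain_head :: "(nat \<times> nat) list \<Rightarrow> nat" where
  "chain_head cl = (case cl of [] \<Rightarrow> 0 | e # _ \<Rightarrow> fst e)"

text \<open>Chain elements are stored relative to \<open>n\<close>, so that the set of chains does not depend on \<open>n\<close>.\<close>

definition chain_pair :: "nat \<Rightarrow> nat \<times> nat \<Rightarrow> nat \<times> nat" where
  "chain_pair n e = (n - fst e, n + snd e)"

definition canonical :: "nat \<Rightarrow> nat \<Rightarrow> (nat \<times> nat) list \<Rightarrow> (nat \<times> nat) list \<Rightarrow> bool" where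
  "canonical c n fl cl \<longleftrightarrow> free_list c fl \<and> chain c cl \<and> chain_head cl < n \<and>
     (\<forall>p\<in>set fl. snd p + chain_head cl \<le> n)"

definition canonical_mon :: "nat \<Rightarrow> (nat \<times> nat) list \<Rightarrow> (nat \<times> nat) list \<Rightarrow> (nat \<Rightarrow>\<^sub>0 nat)" where
  "canonical_mon n fl cl = pairs_mon (mset (fl @ map (chain_pair n) cl))"

lemma chain_head_max: "chain c cl \<Longrightarrow> e \<in> set cl \<Longrightarrow> fst e \<le> chain_head cl"
  by (cases cl) (auto simp: chain_def chain_le_def chain_head_def)

lemma chain_head_cases: "chain_head cl = 0 \<or> (\<exists>e\<in>set cl. chain_head cl = fst e)"
  by (cases cl) (auto simp: chain_head_def)

lemma keys_canonical_mon:
  "x \<in> Poly_Mapping.keys (canonical_mon n fl cl) \<longleftrightarrow>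
    (\<exists>p\<in>set fl. x = fst p \<or> x = snd p) \<or> (\<exists>e\<in>set cl. x = n - fst e \<or> x = n + snd e)"
  unfolding canonical_mon_def keys_pairs_mon by (force simp: chain_pair_def)

lemma canonical_mon_in_monsA:
  assumes "canonical c n fl cl"
  shows "canonical_mon n fl cl \<in> monsA c n (length fl + length cl)"
proof -
  have "p \<in> admissible_pairs c n" if p: "p \<in> set fl" for p
  proof -
    have "1 \<le> fst p" "fst p \<le> snd p" "snd p \<le> fst p + c" "snd p + chain_head cl \<le> n"
      using assms p by (auto simp: canonical_def free_list_def)
    then show ?thesis
      by (cases p) (auto simp: admissible_pairs_def)
  qed
  moreover have "chain_pair n e \<in> admissible_pairs c n" if e: "e \<in> set cl" for e
  proof -
    have cl: "chain c cl" "chain_head cl < n"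
      using assms by (auto simp: canonical_def)
    then have "fst e < n" "e \<in> chain_elems c"
      using chain_head_max[OF cl(1) e] e by (auto simp: chain_def)
    then show ?thesis
      by (auto simp: chain_pair_def chain_elems_def admissible_pairs_def)
  qed
  ultimately have "set (fl @ map (chain_pair n) cl) \<subseteq> admissible_pairs c n"
    by auto
  then show ?thesis
    unfolding monsA_def canonical_mon_def
    by (intro CollectI exI[of _ "mset (fl @ map (chain_pair n) cl)"]) simp
qed

lemma chain_Cons_minimal_pair:
  assumes "chain c cl" "\<forall>e\<in>set cl. fst e < n"
    and "(h, t) \<in> admissible_pairs c n" "n < t"
    and keys: "\<And>x. x \<in> Poly_Mapping.keys (pairs_mon (mset (map (chain_pair n) cl))) \<Longrightarrow>
      h \<le> x \<and> (n < x \<longrightarrow> t \<le> x)"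
  shows "chain c ((n - h, t - n) # cl)"
proof -
  have "chain_le (n - h, t - n) e" if e: "e \<in> set cl" for e
  proof -
    have "h \<le> n - fst e" "n < n + snd e \<longrightarrow> t \<le> n + snd e"
      using keys e unfolding keys_pairs_mon by (force simp: chain_pair_def)+
    moreover have "1 \<le> snd e" "fst e < n"
      using e assms(1,2) by (auto simp: chain_def chain_elems_def)
    ultimately show ?thesis
      by (auto simp: chain_le_def)
  qed
  moreover have "(n - h, t - n) \<in> chain_elems c"
    using assms(3,4) by (auto simp: chain_elems_def admissible_pairs_def)
  ultimately show ?thesis
    using assms(1) by (auto simp: chain_def)
qed

lemma chain_of_upper_pairs:
  assumes "\<forall>p\<in>#P. p \<in> admissible_pairs c n \<and> n < snd p"
  shows "\<exists>cl. chain c cl \<and> (\<forall>e\<in>set cl. fst e < n) \<and> length cl = size P \<and>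
    pairs_mon (mset (map (chain_pair n) cl)) = pairs_mon P"
  using assms
proof (induction "size P" arbitrary: P)
  case 0
  then show ?case
    by (auto simp: chain_def)
next
  case (Suc k)
  then have "P \<noteq> {#}"
    by auto
  then obtain h t R where R: "pairs_mon P = pair_mon (h, t) + pairs_mon R" "size P = Suc (size R)"
    "(h, t) \<in> admissible_pairs c n" "n < t"
    "\<forall>p\<in>#R. p \<in> admissible_pairs c n \<and> n < snd p \<and> h \<le> fst p \<and> t \<le> snd p"
    using extract_chain_pair Suc.prems by blast
  have "k = size R"
    using Suc.hyps(2) R(2) by simp
  then obtain cl where cl: "chain c cl" "\<forall>e\<in>set cl. fst e < n" "length cl = size R"
    "pairs_mon (mset (map (chain_pair n) cl)) = pairs_mon R"
    using Suc.hyps(1)[of R] R(5) by auto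
  have "h \<le> x \<and> (n < x \<longrightarrow> t \<le> x)" if "x \<in> Poly_Mapping.keys (pairs_mon R)" for x
    using that R(5) by (force simp: keys_pairs_mon admissible_pairs_def)
  then have "chain c ((n - h, t - n) # cl)"
    using chain_Cons_minimal_pair[OF cl(1,2) R(3,4)] cl(4) by simp
  moreover have "chain_pair n (n - h, t - n) = (h, t)"
    using R(3,4) by (auto simp: chain_pair_def admissible_pairs_def)
  ultimately show ?case
    using cl R(1-4) by (intro exI[of _ "(n - h, t - n) # cl"]) (auto simp: admissible_pairs_def)
qed

lemma canonical_snoc_free_pair:
  assumes can: "canonical c n fl cl"
    and "(z1, z2) \<in> admissible_pairs c n" "z2 \<le> n"
    and keys: "\<And>x. x \<in> Poly_Mapping.keys (canonical_mon n fl cl) \<Longrightarrow> z2 \<le> x"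
  shows "canonical c n (fl @ [(z1, z2)]) cl"
proof -
  have "z2 + chain_head cl \<le> n"
  proof (cases "chain_head cl = 0")
    case True
    with \<open>z2 \<le> n\<close> show ?thesis
      by simp
  next
    case False
    then obtain e where e: "e \<in> set cl" "chain_head cl = fst e"
      using chain_head_cases[of cl] by auto
    then have "z2 \<le> n - fst e"
      using keys keys_canonical_mon by blast
    moreover have "chain_head cl < n"
      using can by (simp add: canonical_def)
    ultimately show ?thesis
      using e(2) by linarith
  qed
  then show ?thesis
    using assms(1,2) keys[unfolded keys_canonical_mon]
    by (auto simp: canonical_def free_list_def sorted_wrt_append admissible_pairs_def)
qed

lemma canonical_form_exists:
  assumes "0 < n" and "set_mset P \<subseteq> admissible_pairs c n"
  shows "\<exists>fl cl. canonical c n fl cl \<and> length fl + length cl = size P \<and>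
    canonical_mon n fl cl = pairs_mon P"
  using assms(2)
proof (induction "size P" arbitrary: P)
  case 0
  then show ?case
    using assms(1) by (auto simp: canonical_def free_list_def chain_def chain_head_def canonical_mon_def)
next
  case (Suc k)
  show ?case
  proof (cases "\<exists>p\<in>#P. snd p \<le> n")
    case True
    then obtain z1 z2 R where R: "pairs_mon P = pair_mon (z1, z2) + pairs_mon R"
      "size P = Suc (size R)" "(z1, z2) \<in> admissible_pairs c n" "z2 \<le> n"
      "set_mset R \<subseteq> admissible_pairs c n" "\<forall>p\<in>#R. z2 \<le> fst p"
      using extract_free_pair Suc.prems by blast
    have "k = size R"
      using Suc.hyps(2) R(2) by simp
    then obtain fl cl where fl: "canonical c n fl cl" "length fl + length cl = size R"
      "canonical_mon n fl cl = pairs_mon R"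
      using Suc.hyps(1)[of R] R(5) by auto
    have "z2 \<le> x" if "x \<in> Poly_Mapping.keys (canonical_mon n fl cl)" for x
      using that R(5,6) unfolding fl(3) by (force simp: keys_pairs_mon admissible_pairs_def)
    then have "canonical c n (fl @ [(z1, z2)]) cl"
      using canonical_snoc_free_pair[OF fl(1) R(3,4)] by blast
    moreover have "canonical_mon n (fl @ [(z1, z2)]) cl = pairs_mon P"
      using R(1) fl(3) by (simp add: canonical_mon_def ac_simps)
    ultimately show ?thesis
      using fl(2) R(2) by (intro exI[of _ "fl @ [(z1, z2)]"] exI[of _ cl]) simp
  next
    case False
    then obtain cl where cl: "chain c cl" "\<forall>e\<in>set cl. fst e < n" "length cl = size P"
      "pairs_mon (mset (map (chain_pair n) cl)) = pairs_mon P"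
      using chain_of_upper_pairs[of P c n] Suc.prems by fastforce
    then have "canonical c n [] cl"
      using chain_head_cases[of cl] assms(1) by (auto simp: canonical_def free_list_def)
    then show ?thesis
      using cl by (intro exI[of _ "[]"] exI[of _ cl]) (simp add: canonical_mon_def)
  qed
qed

section \<open>Uniqueness of canonical factorizations\<close>

fun flatten_pairs :: "(nat \<times> nat) list \<Rightarrow> nat list" where
  "flatten_pairs [] = []"
| "flatten_pairs (p # ps) = fst p # snd p # flatten_pairs ps"

lemma flatten_pairs_append [simp]: "flatten_pairs (xs @ ys) = flatten_pairs xs @ flatten_pairs ys"
  by (induction xs) auto

lemma length_flatten_pairs [simp]: "length (flatten_pairs ps) = 2 * length ps"
  by (induction ps) auto

lemma set_flatten_pairs: "set (flatten_pairs ps) = fst ` set ps \<union> snd ` set ps"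
  by (induction ps) auto

lemma count_flatten_pairs:
  "count (mset (flatten_pairs ps)) x = count (image_mset fst (mset ps)) x + count (image_mset snd (mset ps)) x"
  by (induction ps) auto

lemma flatten_pairs_inject: "flatten_pairs xs = flatten_pairs ys \<Longrightarrow> xs = ys"
proof (induction xs arbitrary: ys)
  case Nil
  then show ?case
    by (cases ys) auto
next
  case (Cons p xs)
  then show ?case
    by (cases ys) (auto simp: prod_eq_iff)
qed

definition canonical_word :: "nat \<Rightarrow> (nat \<times> nat) list \<Rightarrow> (nat \<times> nat) list \<Rightarrow> nat list" where
  "canonical_word n fl cl = flatten_pairs (rev fl) @ map (\<lambda>e. n - fst e) cl @ map (\<lambda>e. n + snd e) cl"

lemma count_canonical_word:
  "count (mset (canonical_word n fl cl)) x = Poly_Mapping.lookup (canonical_mon n fl cl) x"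
  by (simp add: canonical_word_def canonical_mon_def lookup_add lookup_pairs_mon count_flatten_pairs
      image_mset.compositionality o_def chain_pair_def)

lemma sorted_flatten_pairs_rev: "free_list c fl \<Longrightarrow> sorted (flatten_pairs (rev fl))"
proof (induction fl)
  case Nil
  then show ?case
    by simp
next
  case (Cons p fl)
  then have "free_list c fl" "fst p \<le> snd p" "\<forall>q\<in>set fl. fst q \<le> snd q \<and> snd q \<le> fst p"
    by (auto simp: free_list_def)
  moreover from this(3) have "\<forall>x\<in>set (flatten_pairs (rev fl)). x \<le> fst p"
    by (fastforce simp: set_flatten_pairs)
  ultimately show ?case
    using Cons.IH by (auto simp: sorted_append)
qed

lemma canonical_entry_bounds:
  assumes "canonical c n fl cl"
  shows "\<And>x. x \<in> set (flatten_pairs fl) \<Longrightarrow> x + chain_head cl \<le> n"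
    and "\<And>e. e \<in> set cl \<Longrightarrow> fst e \<le> chain_head cl \<and> chain_head cl < n \<and> 1 \<le> snd e"
  using assms chain_head_max[of c cl]
  by (fastforce simp: canonical_def free_list_def chain_def chain_elems_def set_flatten_pairs)+

lemma sorted_canonical_word:
  assumes "canonical c n fl cl"
  shows "sorted (canonical_word n fl cl)"
proof -
  have "sorted_wrt chain_le cl"
    using assms by (simp add: canonical_def chain_def)
  then have "sorted (map (\<lambda>e. n - fst e) cl)" "sorted (map (\<lambda>e. n + snd e) cl)"
    unfolding sorted_map by (auto elim!: sorted_wrt_mono_rel[rotated] simp: chain_le_def)
  moreover have "sorted (flatten_pairs (rev fl))"
    using assms by (intro sorted_flatten_pairs_rev) (auto simp: canonical_def)
  moreover have "x \<le> n - fst e" if "x \<in> set (flatten_pairs fl)" "e \<in> set cl" for x e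
    using canonical_entry_bounds[OF assms] that by fastforce
  ultimately show ?thesis
    unfolding canonical_word_def by (fastforce simp: sorted_append set_flatten_pairs)
qed

lemma filter_canonical_word:
  assumes "canonical c n fl cl"
  shows "filter (\<lambda>x. n < x) (canonical_word n fl cl) = map (\<lambda>e. n + snd e) cl"
proof -
  have "filter (\<lambda>x. n < x) (flatten_pairs (rev fl)) = []"
    using canonical_entry_bounds(1)[OF assms] by (fastforce simp: filter_empty_conv set_flatten_pairs)
  moreover have "filter (\<lambda>x. n < x) (map (\<lambda>e. n + snd e) cl) = map (\<lambda>e. n + snd e) cl"
    using canonical_entry_bounds(2)[OF assms] by (fastforce simp: filter_id_conv)
  ultimately show ?thesis
    by (auto simp: canonical_word_def filter_empty_conv)
qed

lemma canonical_word_inject: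
  assumes "canonical c n fl cl" "canonical c n fl' cl'"
    and eq: "canonical_word n fl cl = canonical_word n fl' cl'"
  shows "fl = fl' \<and> cl = cl'"
proof -
  have "length cl = length cl'"
    using arg_cong[OF eq, of "\<lambda>w. length (filter (\<lambda>x. n < x) w)"]
    by (simp add: filter_canonical_word[OF assms(1)] filter_canonical_word[OF assms(2)])
  moreover have "length fl = length fl'"
    using arg_cong[OF eq, of length] calculation by (simp add: canonical_word_def)
  ultimately have flat: "flatten_pairs (rev fl) = flatten_pairs (rev fl')"
    and lower: "map (\<lambda>e. n - fst e) cl = map (\<lambda>e. n - fst e) cl'"
    and upper: "map (\<lambda>e. n + snd e) cl = map (\<lambda>e. n + snd e) cl'"
    using eq by (simp_all add: canonical_word_def)
  have "fl = fl'"
    using flatten_pairs_inject[OF flat] by simp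
  moreover have "map fst cl = map fst cl'"
  proof (rule map_inj_on)
    show "map ((-) n) (map fst cl) = map ((-) n) (map fst cl')"
      using lower by (simp add: comp_def)
    show "inj_on ((-) n) (set (map fst cl) \<union> set (map fst cl'))"
      using canonical_entry_bounds(2)[OF assms(1)] canonical_entry_bounds(2)[OF assms(2)]
      by (fastforce intro!: inj_onI)
  qed
  moreover have "map snd xs = map (\<lambda>x. x - n) (map (\<lambda>e. n + snd e) xs)" for xs :: "(nat \<times> nat) list"
    by (simp add: comp_def)
  with upper have "map snd cl = map snd cl'"
    by metis
  ultimately show ?thesis
    by (simp add: pair_list_eqI)
qed

lemma canonical_mon_inject:
  assumes "canonical c n fl cl" "canonical c n fl' cl'"
    and "canonical_mon n fl cl = canonical_mon n fl' cl'"
  shows "fl = fl' \<and> cl = cl'"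
proof -
  have "mset (canonical_word n fl cl) = mset (canonical_word n fl' cl')"
    using assms(3) by (intro multiset_eqI) (simp add: count_canonical_word)
  then have "canonical_word n fl cl = canonical_word n fl' cl'"
    using sorted_canonical_word[OF assms(1)] sorted_canonical_word[OF assms(2)]
    by (metis properties_for_sort sorted_sort_id)
  then show ?thesis
    using canonical_word_inject[OF assms(1,2)] by blast
qed

definition canonical_forms :: "nat \<Rightarrow> nat \<Rightarrow> nat \<Rightarrow> ((nat \<times> nat) list \<times> (nat \<times> nat) list) set" where
  "canonical_forms c n d = {(fl, cl). canonical c n fl cl \<and> length fl + length cl = d}"

lemma monsA_eq_image_canonical_forms:
  assumes "0 < n"
  shows "monsA c n d = (\<lambda>(fl, cl). canonical_mon n fl cl) ` canonical_forms c n d"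
proof
  show "monsA c n d \<subseteq> (\<lambda>(fl, cl). canonical_mon n fl cl) ` canonical_forms c n d"
  proof
    fix m
    assume "m \<in> monsA c n d"
    then obtain P where P: "m = pairs_mon P" "set_mset P \<subseteq> admissible_pairs c n" "size P = d"
      by (auto simp: monsA_def)
    then obtain fl cl where "canonical c n fl cl" "length fl + length cl = d"
      "canonical_mon n fl cl = m"
      using canonical_form_exists[OF assms P(2)] by auto
    then show "m \<in> (\<lambda>(fl, cl). canonical_mon n fl cl) ` canonical_forms c n d"
      by (intro image_eqI[of _ _ "(fl, cl)"]) (auto simp: canonical_forms_def)
  qed
  show "(\<lambda>(fl, cl). canonical_mon n fl cl) ` canonical_forms c n d \<subseteq> monsA c n d"
    using canonical_mon_in_monsA by (auto simp: canonical_forms_def)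
qed

lemma finite_canonical_forms: "finite (canonical_forms c n d)"
proof (rule finite_subset)
  show "canonical_forms c n d \<subseteq> {fl. set fl \<subseteq> {..n} \<times> {..n} \<and> length fl \<le> d}
      \<times> {cl. set cl \<subseteq> {..c} \<times> {..c} \<and> length cl \<le> d}"
    by (fastforce simp: canonical_forms_def canonical_def free_list_def chain_def chain_elems_def)
qed (intro finite_cartesian_product finite_lists_length_le; simp)+

lemma card_monsA:
  assumes "0 < n"
  shows "card (monsA c n d) = card (canonical_forms c n d)"
  unfolding monsA_eq_image_canonical_forms[OF assms]
  by (rule card_image) (auto intro!: inj_onI dest: canonical_mon_inject simp: canonical_forms_def)

section \<open>Counting canonical factorizations\<close>

definition free_lists :: "nat \<Rightarrow> nat \<Rightarrow> nat \<Rightarrow> (nat \<times> nat) list set" where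
  "free_lists c b k = {fl. free_list c fl \<and> length fl = k \<and> (\<forall>p\<in>set fl. snd p \<le> b)}"

text \<open>The value \<open>0\<close> at \<open>b = 0\<close> accounts for the condition \<open>chain_head cl < n\<close> of canonical forms.\<close>

definition free_count :: "nat \<Rightarrow> nat \<Rightarrow> nat \<Rightarrow> nat" where
  "free_count c b k = (if b = 0 then 0 else card (free_lists c b k))"

definition chains :: "nat \<Rightarrow> nat \<Rightarrow> (nat \<times> nat) list set" where
  "chains c m = {cl. chain c cl \<and> length cl = m}"

definition chain_count :: "nat \<Rightarrow> nat \<Rightarrow> nat \<Rightarrow> nat" where
  "chain_count c a m = card {cl \<in> chains c m. chain_head cl = a}"

lemma finite_free_lists: "finite (free_lists c b k)"
proof (rule finite_subset)
  show "free_lists c b k \<subseteq> {fl. set fl \<subseteq> {..b} \<times> {..b} \<and> length fl = k}"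
    by (fastforce simp: free_lists_def free_list_def)
qed (simp add: finite_lists_length_eq)

lemma finite_chains: "finite (chains c m)"
proof (rule finite_subset)
  show "chains c m \<subseteq> {cl. set cl \<subseteq> {..c} \<times> {..c} \<and> length cl = m}"
    by (fastforce simp: chains_def chain_def chain_elems_def)
qed (simp add: finite_lists_length_eq)

lemma card_canonical_forms_fiber:
  assumes "a \<le> n" "m \<le> d"
  shows "card {S \<in> canonical_forms c n d. chain_head (snd S) = a \<and> length (snd S) = m}
    = chain_count c a m * free_count c (n - a) (d - m)"
proof (cases "a < n")
  case True
  have "{S \<in> canonical_forms c n d. chain_head (snd S) = a \<and> length (snd S) = m}
      = free_lists c (n - a) (d - m) \<times> {cl \<in> chains c m. chain_head cl = a}"
    using True assms(2)
    by (auto simp: canonical_forms_def canonical_def free_lists_def chains_def)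
  then show ?thesis
    using True by (simp add: card_cartesian_product free_count_def chain_count_def)
next
  case False
  then have "{S \<in> canonical_forms c n d. chain_head (snd S) = a \<and> length (snd S) = m} = {}"
    by (auto simp: canonical_forms_def canonical_def)
  moreover have "n - a = 0"
    using False by simp
  ultimately show ?thesis
    by (simp only: card.empty free_count_def) simp
qed

lemma card_canonical_forms:
  "card (canonical_forms c n d)
    = (\<Sum>a\<le>n. \<Sum>m\<le>d. chain_count c a m * free_count c (n - a) (d - m))"
proof -
  let ?g = "\<lambda>S. (chain_head (snd S), length (snd S))"
  have "?g ` canonical_forms c n d \<subseteq> {..n} \<times> {..d}"
    by (auto simp: canonical_forms_def canonical_def)
  then have "card (canonical_forms c n d)
      = (\<Sum>am\<in>{..n} \<times> {..d}. card {S \<in> canonical_forms c n d. ?g S = am})"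
    using sum.group[where S = "canonical_forms c n d" and T = "{..n} \<times> {..d}" and g = ?g
        and h = "\<lambda>_. 1::nat"] finite_canonical_forms by simp
  also have "\<dots> = (\<Sum>(a, m)\<in>{..n} \<times> {..d}. chain_count c a m * free_count c (n - a) (d - m))"
    by (intro sum.cong refl) (auto simp: card_canonical_forms_fiber)
  finally show ?thesis
    by (simp add: sum.cartesian_product)
qed

lemma free_list_Cons:
  "free_list c (p # fl) \<longleftrightarrow> free_list c fl \<and> (\<forall>q\<in>set fl. snd q \<le> fst p) \<and>
    1 \<le> fst p \<and> fst p \<le> snd p \<and> snd p \<le> fst p + c"
  by (auto simp: free_list_def)

lemma free_lists_0: "free_lists c b 0 = {[]}"
  by (auto simp: free_lists_def free_list_def)

lemma free_lists_Suc_Suc: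
  "free_lists c (Suc b) (Suc k) = free_lists c b (Suc k) \<union>
    (\<Union>l\<in>{l. l \<le> c \<and> l \<le> b}. (#) (Suc b - l, Suc b) ` free_lists c (Suc b - l) k)"
  (is "?L = ?A \<union> ?B")
proof
  show "?L \<subseteq> ?A \<union> ?B"
  proof
    fix fl
    assume fl: "fl \<in> ?L"
    then obtain p r where p: "fl = p # r"
      by (cases fl) (auto simp: free_lists_def)
    show "fl \<in> ?A \<union> ?B"
    proof (cases "snd p \<le> b")
      case True
      then have "\<forall>q\<in>set fl. snd q \<le> b"
        using fl p by (fastforce simp: free_lists_def free_list_Cons)
      then show ?thesis
        using fl by (auto simp: free_lists_def)
    next
      case False
      then have "snd p = Suc b"
        using fl p by (auto simp: free_lists_def)
      moreover have "r \<in> free_lists c (fst p) k"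
        using fl p by (auto simp: free_lists_def free_list_Cons)
      ultimately show ?thesis
        using fl p by (intro UnI2 UN_I[of "Suc b - fst p"] image_eqI[of _ _ r])
          (auto simp: free_lists_def free_list_Cons prod_eq_iff)
    qed
  qed
  show "?A \<union> ?B \<subseteq> ?L"
    by (fastforce simp: free_lists_def free_list_Cons)
qed

lemma free_count_0: "free_count c b 0 = (if b = 0 then 0 else 1)"
  by (simp add: free_count_def free_lists_0)

lemma free_count_Suc_Suc:
  "free_count c (Suc b) (Suc k) = free_count c b (Suc k) + (\<Sum>l\<le>c. free_count c (Suc b - l) k)"
proof -
  let ?B = "\<lambda>l. (#) (Suc b - l, Suc b) ` free_lists c (Suc b - l) k"
  have "card (free_lists c b (Suc k)) = free_count c b (Suc k)"
  proof (cases "b = 0")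
    case True
    then have "free_lists c b (Suc k) = {}"
      by (force simp: free_lists_def free_list_def length_Suc_conv)
    with True show ?thesis
      by (simp add: free_count_def)
  qed (simp add: free_count_def)
  moreover have "card (\<Union>l\<in>{l. l \<le> c \<and> l \<le> b}. ?B l) = (\<Sum>l\<in>{l. l \<le> c \<and> l \<le> b}. card (?B l))"
    by (rule card_UN_disjoint) (auto simp: finite_free_lists)
  moreover have "card (?B l) = free_count c (Suc b - l) k" if "l \<le> b" for l
    using that by (simp add: card_image free_count_def)
  moreover have "(\<Sum>l\<in>{l. l \<le> c \<and> l \<le> b}. free_count c (Suc b - l) k) = (\<Sum>l\<le>c. free_count c (Suc b - l) k)"
    by (rule sum.mono_neutral_left) (auto simp: free_count_def)
  moreover have "free_lists c b (Suc k) \<inter> (\<Union>l\<in>{l. l \<le> c \<and> l \<le> b}. ?B l) = {}"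
    by (auto simp: free_lists_def)
  ultimately show ?thesis
    by (simp add: free_count_def free_lists_Suc_Suc card_Un_disjoint finite_free_lists)
qed

definition chain_above :: "nat \<Rightarrow> nat \<times> nat \<Rightarrow> (nat \<times> nat) set" where
  "chain_above c e = {e' \<in> chain_elems c. chain_le e e'}"

definition chains_from :: "nat \<Rightarrow> nat \<times> nat \<Rightarrow> nat \<Rightarrow> (nat \<times> nat) list set" where
  "chains_from c e m = {cl. chain c (e # cl) \<and> length cl = m}"

lemma chain_Cons:
  "chain c (e # cl) \<longleftrightarrow> e \<in> chain_elems c \<and> (\<forall>x\<in>set cl. chain_le e x) \<and> chain c cl"
  by (auto simp: chain_def)

lemma chain_Cons_Cons:
  "chain c (e # e' # cl) \<longleftrightarrow> e \<in> chain_elems c \<and> e' \<in> chain_above c e \<and> chain c (e' # cl)"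
  by (auto simp: chain_Cons chain_above_def chain_le_def)

lemma finite_chains_from: "finite (chains_from c e m)"
  by (rule finite_subset[OF _ finite_chains[of c m]]) (auto simp: chains_from_def chains_def chain_Cons)

lemma finite_chain_above: "finite (chain_above c e)"
proof (rule finite_subset)
  show "chain_above c e \<subseteq> {..c} \<times> {..c}"
    by (auto simp: chain_above_def chain_elems_def)
qed simp

lemma card_chains_from_0: "card (chains_from c e 0) = (if e \<in> chain_elems c then 1 else 0)"
proof -
  have "chains_from c e 0 = (if e \<in> chain_elems c then {[]} else {})"
    by (auto simp: chains_from_def chain_def)
  then show ?thesis
    by simp
qed

lemma card_chains_from_Suc:
  "card (chains_from c e (Suc m))
    = (if e \<in> chain_elems c then \<Sum>e'\<in>chain_above c e. card (chains_from c e' m) else 0)"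
proof (cases "e \<in> chain_elems c")
  case True
  have "chains_from c e (Suc m) = (\<Union>e'\<in>chain_above c e. (#) e' ` chains_from c e' m)"
    using True by (auto simp: chains_from_def length_Suc_conv chain_Cons_Cons)
  moreover have "card (\<Union>e'\<in>chain_above c e. (#) e' ` chains_from c e' m)
      = (\<Sum>e'\<in>chain_above c e. card (chains_from c e' m))"
    by (subst card_UN_disjoint) (auto simp: finite_chain_above finite_chains_from card_image)
  ultimately show ?thesis
    using True by simp
next
  case False
  then show ?thesis
    by (simp add: chains_from_def chain_Cons)
qed

lemma chain_count_0: "chain_count c a 0 = (if a = 0 then 1 else 0)"
proof -
  have "{cl \<in> chains c 0. chain_head cl = a} = (if a = 0 then {[]} else {})"
    by (auto simp: chains_def chain_def chain_head_def)
  then show ?thesis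
    by (simp add: chain_count_def)
qed

lemma chain_count_Suc: "chain_count c a (Suc m) = (\<Sum>b\<le>c. card (chains_from c (a, b) m))"
proof -
  have "{cl \<in> chains c (Suc m). chain_head cl = a} = (\<Union>b\<le>c. (#) (a, b) ` chains_from c (a, b) m)"
  proof (intro set_eqI iffI)
    fix cl
    assume cl: "cl \<in> {cl \<in> chains c (Suc m). chain_head cl = a}"
    then obtain b ys where "cl = (a, b) # ys" "length ys = m"
      by (auto simp: chains_def chain_head_def length_Suc_conv)
    moreover have "b \<le> c"
      using cl calculation by (auto simp: chains_def chain_def chain_elems_def)
    ultimately show "cl \<in> (\<Union>b\<le>c. (#) (a, b) ` chains_from c (a, b) m)"
      using cl by (auto simp: chains_def chains_from_def)
  qed (auto simp: chains_def chains_from_def chain_head_def)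
  moreover have "card (\<Union>b\<le>c. (#) (a, b) ` chains_from c (a, b) m) = (\<Sum>b\<le>c. card (chains_from c (a, b) m))"
    by (subst card_UN_disjoint) (auto simp: finite_chains_from card_image)
  ultimately show ?thesis
    by (simp add: chain_count_def)
qed

lemma chain_count_eq_0: "c < a \<Longrightarrow> chain_count c a m = 0"
proof -
  assume "c < a"
  then have empty: "{cl \<in> chains c m. chain_head cl = a} = {}"
    by (auto simp: chains_def chain_def chain_head_def chain_elems_def split: list.splits)
  show ?thesis
    unfolding chain_count_def empty by simp
qed

section \<open>Rational power series\<close>

lemma range_fps_of_poly_1: "(1 :: 'a::comm_ring_1 fps) \<in> range fps_of_poly"
  by (rule range_eqI[where x = 1]) simp

lemma range_fps_of_poly_0: "(0 :: 'a::comm_ring_1 fps) \<in> range fps_of_poly"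
  by (rule range_eqI[where x = 0]) simp

lemma range_fps_of_poly_X: "(fps_X :: 'a::comm_ring_1 fps) \<in> range fps_of_poly"
  by (rule range_eqI[where x = "[:0, 1:]"]) simp

lemma range_fps_of_poly_add:
  "(f :: 'a::comm_ring_1 fps) \<in> range fps_of_poly \<Longrightarrow> g \<in> range fps_of_poly \<Longrightarrow>
    f + g \<in> range fps_of_poly"
  by (auto simp flip: fps_of_poly_add)

lemma range_fps_of_poly_diff:
  "(f :: 'a::comm_ring_1 fps) \<in> range fps_of_poly \<Longrightarrow> g \<in> range fps_of_poly \<Longrightarrow>
    f - g \<in> range fps_of_poly"
  by (auto simp flip: fps_of_poly_diff)

lemma range_fps_of_poly_mult:
  "(f :: 'a::comm_ring_1 fps) \<in> range fps_of_poly \<Longrightarrow> g \<in> range fps_of_poly \<Longrightarrow>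
    f * g \<in> range fps_of_poly"
  by (auto simp flip: fps_of_poly_mult)

lemma range_fps_of_poly_power:
  "(f :: 'a::comm_ring_1 fps) \<in> range fps_of_poly \<Longrightarrow> f ^ k \<in> range fps_of_poly"
  by (auto simp flip: fps_of_poly_power)

lemma range_fps_of_poly_sum:
  "(\<And>x. x \<in> A \<Longrightarrow> (f x :: 'a::comm_ring_1 fps) \<in> range fps_of_poly) \<Longrightarrow>
    sum f A \<in> range fps_of_poly"
  by (induction A rule: infinite_finite_induct)
    (auto intro: range_fps_of_poly_add range_fps_of_poly_0)

lemma one_minus_X_power_in_range_fps_of_poly:
  "(1 - fps_X :: 'a::comm_ring_1 fps) ^ k \<in> range fps_of_poly"
  by (intro range_fps_of_poly_power range_fps_of_poly_diff range_fps_of_poly_1 range_fps_of_poly_X)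

lemma triangular_fps_system_denominator:
  fixes F :: "'a \<Rightarrow> 'b::comm_ring_1 fps" and rank :: "'a \<Rightarrow> nat"
  assumes U: "\<And>e. e \<in> D \<Longrightarrow> finite (U e) \<and> e \<in> U e \<and> U e \<subseteq> D"
    and rank_less: "\<And>e e'. e \<in> D \<Longrightarrow> e' \<in> U e - {e} \<Longrightarrow> rank e' < rank e"
    and F: "\<And>e. e \<in> D \<Longrightarrow> F e = 1 + fps_X * sum F (U e)"
    and "e \<in> D"
  shows "(1 - fps_X) ^ (rank e + 1) * F e \<in> range fps_of_poly"
  using \<open>e \<in> D\<close>
proof (induction "rank e" arbitrary: e rule: less_induct)
  case less
  let ?Y = "1 - fps_X :: 'b fps" and ?V = "U e - {e}"
  have "F e = 1 + fps_X * (F e + sum F ?V)"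
    using F[OF less.prems] sum.remove[of "U e" e F] U[OF less.prems] by simp
  then have step: "?Y * F e = 1 + fps_X * sum F ?V"
    by (simp add: algebra_simps)
  have split: "?Y ^ rank e * F e' = ?Y ^ (rank e - rank e' - 1) * (?Y ^ (rank e' + 1) * F e')"
    if "e' \<in> ?V" for e'
  proof -
    have "rank e = (rank e - rank e' - 1) + (rank e' + 1)"
      using rank_less[OF less.prems that] by simp
    then show ?thesis
      by (metis power_add mult.assoc)
  qed
  have "?Y ^ (rank e + 1) * F e = ?Y ^ rank e * (?Y * F e)"
    by (simp add: mult_ac)
  also have "\<dots> = ?Y ^ rank e + fps_X * (\<Sum>e'\<in>?V. ?Y ^ rank e * F e')"
    unfolding step by (simp add: algebra_simps sum_distrib_left)
  also have "\<dots> = ?Y ^ rank e + fps_X * (\<Sum>e'\<in>?V. ?Y ^ (rank e - rank e' - 1) * (?Y ^ (rank e' + 1) * F e'))"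
    using split by simp
  finally have eq: "?Y ^ (rank e + 1) * F e
      = ?Y ^ rank e + fps_X * (\<Sum>e'\<in>?V. ?Y ^ (rank e - rank e' - 1) * (?Y ^ (rank e' + 1) * F e'))" .
  have IH: "?Y ^ (rank e' + 1) * F e' \<in> range fps_of_poly" if "e' \<in> ?V" for e'
    using less.hyps[OF rank_less[OF less.prems that]] U[OF less.prems] that by blast
  show ?case
    unfolding eq
    by (intro range_fps_of_poly_add range_fps_of_poly_mult range_fps_of_poly_sum
        range_fps_of_poly_X one_minus_X_power_in_range_fps_of_poly IH)
qed

lemma fps_fps_mult_nth:
  "(F * G) $ n $ d = (\<Sum>i\<le>n. \<Sum>j\<le>d. F $ i $ j * G $ (n - i) $ (d - j))"
  by (simp add: fps_mult_nth fps_sum_nth atLeast0AtMost)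

text \<open>\<open>fps2 H = \<Sum> H n d s\<^sup>n t\<^sup>d\<close> with \<open>s = fps_X\<close> and \<open>t = fps_const fps_X\<close>.\<close>

definition fps2 :: "(nat \<Rightarrow> nat \<Rightarrow> 'a) \<Rightarrow> 'a fps fps" where
  "fps2 H = Abs_fps (\<lambda>n. Abs_fps (H n))"

lemma fps2_nth [simp]: "fps2 H $ n $ d = H n d"
  by (simp add: fps2_def)

definition fps2_poly :: "'a::zero fps fps \<Rightarrow> bool" where
  "fps2_poly F \<longleftrightarrow> (\<exists>N. \<forall>i j. N < i \<or> N < j \<longrightarrow> F $ i $ j = 0)"

definition fps2_rational :: "'a::idom fps fps \<Rightarrow> bool" where
  "fps2_rational F \<longleftrightarrow> (\<exists>P Q. fps2_poly P \<and> fps2_poly Q \<and> Q \<noteq> 0 \<and> Q * F = P)"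

lemma fps2_polyE:
  assumes "fps2_poly F"
  obtains N where "\<And>i. N < i \<Longrightarrow> F $ i = 0" "\<And>i j. N < j \<Longrightarrow> F $ i $ j = 0"
  using assms unfolding fps2_poly_def by (metis fps_ext fps_zero_nth)

lemma fps2_poly_mult:
  fixes F G :: "'a::semiring_0 fps fps"
  assumes "fps2_poly F" "fps2_poly G"
  shows "fps2_poly (F * G)"
proof -
  obtain M where M: "\<And>i. M < i \<Longrightarrow> F $ i = 0" "\<And>i j. M < j \<Longrightarrow> F $ i $ j = 0"
    using fps2_polyE[OF assms(1)] by blast
  obtain N where N: "\<And>i. N < i \<Longrightarrow> G $ i = 0" "\<And>i j. N < j \<Longrightarrow> G $ i $ j = 0"
    using fps2_polyE[OF assms(2)] by blast
  have "F $ i $ j * G $ (n - i) $ (d - j) = 0" if "M + N < n \<or> M + N < d" "i \<le> n" "j \<le> d" for n d i j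
    using that M N by (cases "M < i \<or> N < n - i"; cases "M < j \<or> N < d - j") auto
  then show ?thesis
    unfolding fps2_poly_def fps_fps_mult_nth by (intro exI[of _ "M + N"]) auto
qed

lemma fps2_poly_add:
  fixes F G :: "'a::monoid_add fps fps"
  assumes "fps2_poly F" "fps2_poly G"
  shows "fps2_poly (F + G)"
proof -
  obtain M N where "\<forall>i j. M < i \<or> M < j \<longrightarrow> F $ i $ j = 0" "\<forall>i j. N < i \<or> N < j \<longrightarrow> G $ i $ j = 0"
    using assms by (auto simp: fps2_poly_def)
  then show ?thesis
    unfolding fps2_poly_def by (intro exI[of _ "max M N"]) auto
qed

lemma fps2_poly_uminus: "fps2_poly (F :: 'a::group_add fps fps) \<Longrightarrow> fps2_poly (- F)"
  unfolding fps2_poly_def by simp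

lemma fps2_poly_diff:
  "fps2_poly (F :: 'a::group_add fps fps) \<Longrightarrow> fps2_poly G \<Longrightarrow> fps2_poly (F - G)"
  unfolding diff_conv_add_uminus by (intro fps2_poly_add fps2_poly_uminus)

lemma fps2_poly_0: "fps2_poly 0"
  by (simp add: fps2_poly_def)

lemma fps2_poly_sum:
  "(\<And>x. x \<in> A \<Longrightarrow> fps2_poly (f x :: 'a::comm_monoid_add fps fps)) \<Longrightarrow> fps2_poly (sum f A)"
  by (induction A rule: infinite_finite_induct) (auto intro!: fps2_poly_add fps2_poly_0)

lemma fps2_poly_X: "fps2_poly fps_X"
  and fps2_poly_1: "fps2_poly 1"
  unfolding fps2_poly_def by (auto intro!: exI[of _ 1])

lemma fps2_poly_power: "fps2_poly F \<Longrightarrow> fps2_poly (F ^ k)"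
  by (induction k) (auto intro: fps2_poly_mult fps2_poly_1)

lemma fps2_poly_const:
  assumes "f \<in> range fps_of_poly"
  shows "fps2_poly (fps_const f)"
proof -
  obtain p where "f = fps_of_poly p"
    using assms by blast
  then show ?thesis
    unfolding fps2_poly_def by (intro exI[of _ "degree p"]) (auto simp: coeff_eq_0)
qed

lemma fps2_rational_mult:
  assumes "fps2_rational F" "fps2_rational G"
  shows "fps2_rational (F * G)"
proof -
  obtain P Q where "fps2_poly P" "fps2_poly Q" "Q \<noteq> 0" "Q * F = P"
    using assms(1) by (auto simp: fps2_rational_def)
  moreover obtain P' Q' where "fps2_poly P'" "fps2_poly Q'" "Q' \<noteq> 0" "Q' * G = P'"
    using assms(2) by (auto simp: fps2_rational_def)
  ultimately show ?thesis
    unfolding fps2_rational_def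
    by (intro exI[of _ "P * P'"] exI[of _ "Q * Q'"]) (auto intro: fps2_poly_mult simp: mult_ac)
qed

lemma rational_bivariate_if_fps2_rational:
  assumes "fps2_rational (fps2 H)"
  shows "rational_bivariate H"
proof -
  obtain P Q where PQ: "fps2_poly P" "fps2_poly Q" "Q \<noteq> 0" "Q * fps2 H = P"
    using assms by (auto simp: fps2_rational_def)
  obtain N where N: "\<forall>i j. N < i \<or> N < j \<longrightarrow> P $ i $ j = 0 \<and> Q $ i $ j = 0"
    using PQ(1,2) unfolding fps2_poly_def by (metis max.strict_boundedE)
  obtain i j where "Q $ i $ j \<noteq> 0"
    using PQ(3) by (metis fps_ext fps_zero_nth)
  moreover have "(\<Sum>i\<le>n. \<Sum>j\<le>d. Q $ i $ j * H (n - i) (d - j)) = P $ n $ d" for n d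
    using arg_cong[OF PQ(4), of "\<lambda>F. F $ n $ d"] by (simp add: fps_fps_mult_nth)
  ultimately show ?thesis
    unfolding rational_bivariate_def using N
    by (intro exI[of _ "\<lambda>i j. P $ i $ j"] exI[of _ "\<lambda>i j. Q $ i $ j"] exI[of _ N]) auto
qed

lemma fps2_rational_finite_rows:
  fixes H :: "nat \<Rightarrow> nat \<Rightarrow> 'a::idom"
  assumes rows: "\<And>a. (1 - fps_X) ^ k * Abs_fps (H a) \<in> range fps_of_poly"
    and vanish: "\<And>a m. N < a \<Longrightarrow> H a m = 0"
  shows "fps2_rational (fps2 H)"
proof -
  define Q :: "'a fps fps" where "Q = fps_const ((1 - fps_X) ^ k)"
  have "Q * fps2 H = (\<Sum>a\<le>N. fps_X ^ a * fps_const ((1 - fps_X) ^ k * Abs_fps (H a)))"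
  proof (rule fps_ext)
    fix a
    let ?G = "\<lambda>a. (1 - fps_X) ^ k * Abs_fps (H a)"
    have "(\<Sum>a'\<le>N. fps_X ^ a' * fps_const (?G a')) $ a = (\<Sum>a'\<le>N. if a' = a then ?G a' else 0)"
      unfolding fps_sum_nth fps_X_power_mult_nth by (intro sum.cong) auto
    moreover have "Abs_fps (H a) = 0" if "N < a"
      using vanish[OF that] by (intro fps_ext) simp
    ultimately show "(Q * fps2 H) $ a = (\<Sum>a'\<le>N. fps_X ^ a' * fps_const (?G a')) $ a"
      by (simp add: Q_def fps2_def)
  qed
  moreover have "fps2_poly (\<Sum>a\<le>N. fps_X ^ a * fps_const ((1 - fps_X) ^ k * Abs_fps (H a)))"
    by (intro fps2_poly_sum fps2_poly_mult fps2_poly_power fps2_poly_X fps2_poly_const rows)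
  moreover have "fps2_poly Q"
    unfolding Q_def by (intro fps2_poly_const one_minus_X_power_in_range_fps_of_poly)
  moreover have "Q $ 0 $ 0 = 1"
    by (simp add: Q_def fps_nth_power_0)
  then have "Q \<noteq> 0"
    by auto
  ultimately show ?thesis
    unfolding fps2_rational_def by blast
qed

definition chains_from_series :: "nat \<Rightarrow> nat \<times> nat \<Rightarrow> 'a::comm_ring_1 fps" where
  "chains_from_series c e = Abs_fps (\<lambda>m. of_nat (card (chains_from c e m)))"

lemma chains_from_series_eq:
  "e \<in> chain_elems c \<Longrightarrow>
    chains_from_series c e = 1 + fps_X * sum (chains_from_series c) (chain_above c e)"
  by (intro fps_ext) (auto simp: chains_from_series_def card_chains_from_0 card_chains_from_Suc
      fps_sum_nth gr0_conv_Suc)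

lemma chains_from_series_eq_0: "e \<notin> chain_elems c \<Longrightarrow> chains_from_series c e = 0"
  by (intro fps_ext) (simp add: chains_from_series_def chains_from_def chain_Cons)

lemma chains_from_series_denominator:
  "(1 - fps_X) ^ (2 * c + 1) * chains_from_series c e \<in> range fps_of_poly"
proof (cases "e \<in> chain_elems c")
  case True
  let ?rank = "\<lambda>e. fst e + (c - snd e)"
  have rank_denominator: "(1 - fps_X) ^ (?rank e + 1) * chains_from_series c e \<in> range fps_of_poly"
  proof (rule triangular_fps_system_denominator[where D = "chain_elems c" and U = "chain_above c"])
    show "finite (chain_above c e') \<and> e' \<in> chain_above c e' \<and> chain_above c e' \<subseteq> chain_elems c"
      if "e' \<in> chain_elems c" for e'
      using that by (intro conjI finite_chain_above) (auto simp: chain_above_def chain_le_def)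
    show "?rank e'' < ?rank e'" if "e' \<in> chain_elems c" "e'' \<in> chain_above c e' - {e'}" for e' e''
      using that by (auto simp: chain_above_def chain_le_def chain_elems_def prod_eq_iff)
  qed (use True chains_from_series_eq in auto)
  have "2 * c + 1 = (2 * c - ?rank e) + (?rank e + 1)"
    using True by (auto simp: chain_elems_def)
  then have eq: "(1 - fps_X) ^ (2 * c + 1) * chains_from_series c e
      = (1 - fps_X) ^ (2 * c - ?rank e) * ((1 - fps_X) ^ (?rank e + 1) * chains_from_series c e)"
    by (metis power_add mult.assoc)
  show ?thesis
    unfolding eq by (intro range_fps_of_poly_mult one_minus_X_power_in_range_fps_of_poly rank_denominator)
next
  case False
  then show ?thesis
    by (simp add: chains_from_series_eq_0 range_fps_of_poly_0)
qed

definition chain_series :: "nat \<Rightarrow> 'a::comm_ring_1 fps fps" where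
  "chain_series c = fps2 (\<lambda>a m. of_nat (chain_count c a m))"

lemma chain_count_series:
  "Abs_fps (\<lambda>m. of_nat (chain_count c a m))
    = (if a = 0 then 1 else 0) + fps_X * (\<Sum>b\<le>c. chains_from_series c (a, b))"
  by (intro fps_ext) (auto simp: chain_count_0 chain_count_Suc chains_from_series_def fps_sum_nth
      gr0_conv_Suc)

lemma fps2_rational_chain_series: "fps2_rational (chain_series c :: 'a::idom fps fps)"
  unfolding chain_series_def
proof (rule fps2_rational_finite_rows)
  show "(1 - fps_X) ^ (2 * c + 1) * Abs_fps (\<lambda>m. of_nat (chain_count c a m) :: 'a)
      \<in> range fps_of_poly" for a
    unfolding chain_count_series distrib_left sum_distrib_left mult.left_commute[of _ fps_X]
    by (intro range_fps_of_poly_add range_fps_of_poly_mult range_fps_of_poly_sum range_fps_of_poly_X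
        one_minus_X_power_in_range_fps_of_poly chains_from_series_denominator)
      (simp add: range_fps_of_poly_1 range_fps_of_poly_0)
  show "\<And>a m. c < a \<Longrightarrow> of_nat (chain_count c a m) = 0"
    by (simp add: chain_count_eq_0)
qed

definition free_series :: "nat \<Rightarrow> 'a::comm_ring_1 fps fps" where
  "free_series c = fps2 (\<lambda>b k. of_nat (free_count c b k))"

lemma free_series_recursion:
  "free_series c
    = fps_X + fps_X * free_series c + fps_const fps_X * (\<Sum>l\<le>c. fps_X ^ l * free_series c)"
  (is "?G = _")
proof (intro fps_ext)
  fix b k
  have nth: "?G $ b' $ k' = of_nat (free_count c b' k')" for b' k'
    by (simp add: free_series_def)
  have shift: "(\<Sum>l\<le>c. fps_X ^ l * ?G) $ b' $ k' = (\<Sum>l\<le>c. of_nat (free_count c (b' - l) k'))"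
    for b' k'
    unfolding fps_sum_nth fps_X_power_mult_nth
    by (intro sum.cong) (auto simp: nth free_count_def)
  show "?G $ b $ k = (fps_X + fps_X * ?G + fps_const fps_X * (\<Sum>l\<le>c. fps_X ^ l * ?G)) $ b $ k"
  proof (cases b)
    case 0
    then show ?thesis
      by (cases k) (simp_all add: nth free_count_def shift)
  next
    case (Suc b')
    then show ?thesis
      by (cases k) (simp_all add: nth free_count_0 free_count_Suc_Suc shift)
  qed
qed

lemma free_series_equation:
  "(1 - fps_X - fps_const fps_X * (\<Sum>l\<le>c. fps_X ^ l)) * free_series c = fps_X"
proof -
  let ?G = "free_series c"
  have "(1 - fps_X - fps_const fps_X * (\<Sum>l\<le>c. fps_X ^ l)) * ?G
      = ?G - fps_X * ?G - fps_const fps_X * (\<Sum>l\<le>c. fps_X ^ l * ?G)"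
    by (simp add: left_diff_distrib mult.assoc sum_distrib_right)
  also have "\<dots> = fps_X"
    using arg_cong[OF free_series_recursion[of c],
        of "\<lambda>F. F - fps_X * ?G - fps_const fps_X * (\<Sum>l\<le>c. fps_X ^ l * ?G)"]
    by simp
  finally show ?thesis .
qed

lemma fps2_rational_free_series: "fps2_rational (free_series c :: 'a::idom fps fps)"
proof -
  let ?Q = "1 - fps_X - fps_const fps_X * (\<Sum>l\<le>c. fps_X ^ l) :: 'a fps fps"
  have "fps2_poly ?Q"
    by (intro fps2_poly_diff fps2_poly_mult fps2_poly_sum fps2_poly_power fps2_poly_1 fps2_poly_X
        fps2_poly_const range_fps_of_poly_X)
  moreover have "?Q $ 0 $ 0 = 1"
    by simp
  then have "?Q \<noteq> 0"
    by (metis fps_zero_nth zero_neq_one)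
  ultimately show ?thesis
    unfolding fps2_rational_def using free_series_equation fps2_poly_X by blast
qed

lemma dimK_gradedA:
  assumes "0 < n"
  shows "dimK (gradedA c n d :: 'k::field mpoly set)
    = (\<Sum>a\<le>n. \<Sum>m\<le>d. chain_count c a m * free_count c (n - a) (d - m))"
proof -
  have "finite (monsA c n d)"
    unfolding monsA_eq_image_canonical_forms[OF assms] by (intro finite_imageI finite_canonical_forms)
  then show ?thesis
    by (simp add: gradedA_eq_monomial_span dimK_monomial_span card_monsA[OF assms] card_canonical_forms)
qed

lemma Hilbert_series_gradedA:
  "fps2 (\<lambda>n d. if 1 \<le> n then of_nat (dimK (gradedA c n d :: 'k::field mpoly set)) else 0)
    = chain_series c * (free_series c :: 'a::comm_ring_1 fps fps)"
proof (intro fps_ext)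
  fix n d
  show "fps2 (\<lambda>n d. if 1 \<le> n then of_nat (dimK (gradedA c n d :: 'k mpoly set)) else 0) $ n $ d
      = (chain_series c * free_series c :: 'a fps fps) $ n $ d"
    unfolding fps_fps_mult_nth
    by (cases n) (simp_all add: chain_series_def free_series_def free_count_def dimK_gradedA)
qed

theorem theorem5p3:
  fixes c :: nat
  shows "rational_bivariate
           (\<lambda>n d. if 1 \<le> n then of_nat (dimK (gradedA c n d :: 'k::field mpoly set)) else 0)"
proof (rule rational_bivariate_if_fps2_rational)
  show "fps2_rational (fps2
      (\<lambda>n d. if 1 \<le> n then of_nat (dimK (gradedA c n d :: 'k::field mpoly set)) else 0))"
    unfolding Hilbert_series_gradedA
    by (intro fps2_rational_mult fps2_rational_chain_series fps2_rational_free_series)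
qed

end
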